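(* Let $\alpha=(\alpha_\pi)_{\pi\in\mathcal P}$ and $\beta=(\beta_\pi)_{\pi\in\mathcal P}$ be admissible families of weights. Then $\alpha=\beta$ if and only if $\alpha_\sigma=\beta_\sigma$ for every partition $\sigma\in\mathcal P$ with exactly two blocks.
   Context: Fix a finite set $\mathcal F$ of faces. For a word $\mathbf f\in\mathcal F^n$ ($n\ge1$), $[n]_{\mathbf f}$ is $\{1,\dots,n\}$ with faces $\ell\mapsto\mathbf f(\ell)$ (elements are called legs); $\mathcal P(\mathbf f)$ is the set of set partitions of $[n]$, viewed with these faces, and $\mathcal P=\bigcup_{\mathbf f}\mathcal P(\mathbf f)$. A finite totally ordered set $S$ with a face map is identified with $[m]_{|S|}$ through the order-preserving bijection ($|S|$ = word of faces read in order), so partitions of such sets (e.g. of a subset of $[n]$ with restricted faces, or of a quotient) are elements of $\mathcal P$. $1_{\mathbf f}$ is the one-block partition. For blocks $\beta_1\ne\beta_2$ of $\pi$, $\pi_{\beta_1\smile\beta_2}=(\pi\setminus\{\beta_1,\beta_2\})\cup\{\beta_1\cup\beta_2\}$, and $\{\beta_1,\beta_2\}$ is regarded as a partition of the multi-faced set $\beta_1\cup\beta_2$. Reduction: for $\pi\in\mathcal P(\mathbf f)$ let $s\sim t$ ($s\le t$) iff all $r\in[s,t]$ have the same face and lie in the same block; $\pi_{\mathrm{red}}$ is the induced partition of the quotient $[n]/\sim$ (classes are intervals, ordered naturally, with their common face). Mirror: $\overline{\mathbf f}(i)=\mathbf f(n+1-i)$, $\overline\pi=\{\{n+1-i:i\in\beta\}:\beta\in\pi\}\in\mathcal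 P(\overline{\mathbf f})$. A family $\alpha=(\alpha_\pi)_{\pi\in\mathcal P}$ of complex numbers is admissible if: (i) $\alpha_{1_{\mathbf f}}=1$ for all $\mathbf f$; (ii) $\alpha_{\{\{1\},\{2\}\}}=1$ for every $\mathbf f\in\mathcal F^2$; (iii) $\alpha_\pi=\alpha_{\pi_{\mathrm{red}}}$; (iv) if $\pi\in\mathcal P(\mathbf f)$ has blocks $\beta_1\ne\beta_2$ with $i\in\beta_1$, $i+1\in\beta_2$, $\mathbf f(i)=\mathbf f(i+1)$, then $\alpha_\pi=\alpha_{\pi_{\beta_1\smile\beta_2}}\alpha_{\{\beta_1,\beta_2\}}$; (v) $\alpha_\pi=\alpha_\sigma$ whenever $\pi\in\mathcal P(\mathbf f)$, $\sigma\in\mathcal P(\mathbf g)$ have the same underlying set partition of $[n]$ and $\mathbf f(\ell)=\mathbf g(\ell)$ for $1<\ell<n$; (vi) $\alpha_{\overline\pi}=\overline{\alpha_\pi}$. *)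

theory Defs
  imports Complex_Main "HOL-Library.Disjoint_Sets"
begin

text \<open>An element of the set P of multi-faced partitions is a pair (w, p): a word w of faces
  (w ! (i - 1) is the face of leg i) of length n \<ge> 1, and a set partition p of {1..n}.\<close>

type_synonym 'f mpart = "'f list \<times> nat set set"

definition Pf :: "'f mpart set" where
  "Pf = {(w, p). 1 \<le> length w \<and> partition_on {1..length w} p}"

text \<open>Standardisation: a finite subset S of the legs of w (totally ordered, with the restricted
  faces) and a partition q of S become an element of P via the order-preserving bijection
  S \<rightarrow> {1..|S|}, i \<mapsto> rank of i in S.\<close>

definition rank :: "nat set \<Rightarrow> nat \<Rightarrow> nat" where
  "rank S i = card {j \<in> S. j \<le> i}"

definition std :: "'f list \<Rightarrow> nat set \<Rightarrow> nat set set \<Rightarrow> 'f mpart" where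
  "std w S q = (map (\<lambda>i. w ! (i - 1)) (sorted_list_of_set S), (\<lambda>b. rank S ` b) ` q)"

definition one_block :: "'f list \<Rightarrow> 'f mpart" where
  "one_block w = (w, {{1..length w}})"

definition merge :: "nat set set \<Rightarrow> nat set \<Rightarrow> nat set \<Rightarrow> nat set set" where
  "merge p b1 b2 = (p - {b1, b2}) \<union> {b1 \<union> b2}"

definition red_sim :: "'f list \<Rightarrow> nat set set \<Rightarrow> nat \<Rightarrow> nat \<Rightarrow> bool" where
  "red_sim w p s t \<longleftrightarrow> s \<le> t \<and> (\<forall>r\<in>{s..t}. w ! (r - 1) = w ! (s - 1)) \<and> (\<exists>b\<in>p. {s..t} \<subseteq> b)"

definition red_class :: "'f list \<Rightarrow> nat set set \<Rightarrow> nat \<Rightarrow> nat set" where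
  "red_class w p i = {j \<in> {1..length w}. red_sim w p i j \<or> red_sim w p j i}"

text \<open>The quotient [n]/~ is identified (order-preservingly, faces preserved) with the set of
  minima of the classes; a class belongs to the block containing it.\<close>

definition reduce :: "'f mpart \<Rightarrow> 'f mpart" where
  "reduce \<pi> = (let w = fst \<pi>; p = snd \<pi>; Q = red_class w p ` {1..length w} in
      std w (Min ` Q) ((\<lambda>b. Min ` {c \<in> Q. c \<subseteq> b}) ` p))"

definition mirror :: "'f mpart \<Rightarrow> 'f mpart" where
  "mirror \<pi> = (rev (fst \<pi>), (\<lambda>b. (\<lambda>i. length (fst \<pi>) + 1 - i) ` b) ` snd \<pi>)"

definition admissible :: "('f mpart \<Rightarrow> complex) \<Rightarrow> bool" where
  "admissible \<alpha> \<longleftrightarrow>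
     (\<forall>w. 1 \<le> length w \<longrightarrow> \<alpha> (one_block w) = 1) \<and>
     (\<forall>w. length w = 2 \<longrightarrow> \<alpha> (w, {{1}, {2}}) = 1) \<and>
     (\<forall>\<pi>\<in>Pf. \<alpha> \<pi> = \<alpha> (reduce \<pi>)) \<and>
     (\<forall>(w, p)\<in>Pf. \<forall>b1\<in>p. \<forall>b2\<in>p. \<forall>i. b1 \<noteq> b2 \<and> i \<in> b1 \<and> i + 1 \<in> b2 \<and> w ! (i - 1) = w ! i \<longrightarrow>
        \<alpha> (w, p) = \<alpha> (w, merge p b1 b2) * \<alpha> (std w (b1 \<union> b2) {b1, b2})) \<and>
     (\<forall>(w, p)\<in>Pf. \<forall>(v, q)\<in>Pf. length v = length w \<and> q = p \<and>
        (\<forall>l. 1 < l \<and> l < length w \<longrightarrow> w ! (l - 1) = v ! (l - 1)) \<longrightarrow> \<alpha> (w, p) = \<alpha> (v, q)) \<and>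
     (\<forall>\<pi>\<in>Pf. \<alpha> (mirror \<pi>) = cnj (\<alpha> \<pi>))"

end

theory Submission
  imports Defs
begin

(* Giving the first leg the face of the second leaves an admissible weight unchanged by (v).
   If legs 1 and 2 then lie in one block, they are identified by the reduction, which therefore
   has fewer legs (iii); otherwise (iv) factors the weight into its value on the partition with
   these two blocks merged and its value on a two-block partition. Induction on the number of
   legs plus the number of blocks thus expresses every value through values on one-block
   partitions, which are 1, and values on two-block partitions. *)

lemma rank_less_rank:
  assumes "finite S" "i \<in> S" "j \<in> S" "i < j"
  shows "rank S i < rank S j"
proof -
  have "{k \<in> S. k \<le> i} \<subseteq> {k \<in> S. k \<le> j}" using assms by auto
  moreover have "j \<in> {k \<in> S. k \<le> j}" "j \<notin> {k \<in> S. k \<le> i}" using assms by auto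
  ultimately have "{k \<in> S. k \<le> i} \<subset> {k \<in> S. k \<le> j}" by blast
  then show ?thesis unfolding rank_def using assms(1) by (intro psubset_card_mono) auto
qed

lemma inj_on_rank: "finite S \<Longrightarrow> inj_on (rank S) S"
  by (metis inj_onI less_irrefl linorder_cases rank_less_rank)

lemma rank_image:
  assumes "finite S"
  shows "rank S ` S = {1..card S}"
proof (rule card_subset_eq)
  show "rank S ` S \<subseteq> {1..card S}"
  proof
    fix r assume "r \<in> rank S ` S"
    then obtain i where "i \<in> S" "r = rank S i" by blast
    moreover have "0 < rank S i" unfolding rank_def
      using assms \<open>i \<in> S\<close> by (auto simp: card_gt_0_iff)
    moreover have "rank S i \<le> card S" unfolding rank_def using assms by (intro card_mono) auto
    ultimately show "r \<in> {1..card S}" by simp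
  qed
  show "card (rank S ` S) = card {1..card S}"
    using card_image[OF inj_on_rank[OF assms]] by simp
qed simp

lemma std_in_Pf:
  assumes "finite S" "S \<noteq> {}" "partition_on S q"
  shows "std w S q \<in> Pf"
proof -
  have "partition_on (rank S ` S) ((`) (rank S) ` q - {{}})"
    using partition_on_inj_image[OF assms(3) inj_on_rank[OF assms(1)]] .
  moreover have "{} \<notin> (`) (rank S) ` q"
    using partition_onD3[OF assms(3)] by auto
  ultimately have "partition_on {1..card S} ((`) (rank S) ` q)"
    by (simp add: rank_image[OF assms(1)])
  moreover have "1 \<le> card S" using assms(1,2) by (simp add: Suc_leI card_gt_0_iff)
  ultimately show ?thesis unfolding std_def Pf_def by simp
qed

lemma card_snd_std:
  assumes "finite S" "partition_on S q"
  shows "card (snd (std w S q)) = card q"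
proof -
  have "inj_on ((`) (rank S)) (Pow S)"
    using inj_on_rank[OF assms(1)] by (auto intro: inj_onI simp: inj_on_image_eq_iff)
  moreover have "q \<subseteq> Pow S" using partition_onD1[OF assms(2)] by auto
  ultimately show ?thesis unfolding std_def by (simp add: card_image inj_on_subset)
qed

lemma length_fst_std: "length (fst (std w S q)) = card S"
  by (simp add: std_def)

lemma partition_on_block_eq:
  "partition_on A P \<Longrightarrow> b \<in> P \<Longrightarrow> b' \<in> P \<Longrightarrow> x \<in> b \<Longrightarrow> x \<in> b' \<Longrightarrow> b = b'"
  by (meson disjointD disjoint_iff partition_onD2)

lemma card_partition_on_le:
  assumes "finite A" "partition_on A P"
  shows "card P \<le> card A"
proof -
  have "card P = (\<Sum>b\<in>P. 1)" by simp
  also have "\<dots> \<le> (\<Sum>b\<in>P. card b)"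
    using assms partition_onD1[OF assms(2)] partition_onD3[OF assms(2)]
    by (intro sum_mono) (metis One_nat_def Suc_leI Union_upper card_gt_0_iff finite_subset)
  also have "\<dots> = card A"
    using assms by (metis Union_upper finite_subset partition_onD1 product_partition)
  finally show ?thesis .
qed

lemma partition_on_merge:
  assumes "partition_on A p" "b1 \<in> p" "b2 \<in> p"
  shows "partition_on A (merge p b1 b2)"
proof (rule partition_onI)
  show "\<Union>(merge p b1 b2) = A"
    using partition_onD1[OF assms(1)] assms(2,3) unfolding merge_def by auto
  show "{} \<notin> merge p b1 b2"
    using partition_onD3[OF assms(1)] assms(2) unfolding merge_def by auto
  show "disjnt x y" if "x \<in> merge p b1 b2" "y \<in> merge p b1 b2" "x \<noteq> y" for x y
    using that partition_on_block_eq[OF assms(1)] assms(2,3)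
    unfolding merge_def disjnt_def by auto
qed

lemma card_merge_less:
  assumes "finite p" "b1 \<in> p" "b2 \<in> p" "b1 \<noteq> b2"
  shows "card (merge p b1 b2) < card p"
proof -
  have "card (merge p b1 b2) \<le> card (p - {b1, b2}) + 1"
    unfolding merge_def using assms(1) by (simp add: card_insert_le_m1 card_insert_if)
  moreover have "card (p - {b1, b2}) = card p - 2"
    using assms by (simp add: card_Diff_subset)
  moreover have "card {b1, b2} \<le> card p" using assms by (intro card_mono) auto
  ultimately show ?thesis using assms(4) by simp
qed

definition red_classes :: "'f list \<Rightarrow> nat set set \<Rightarrow> nat set set" where
  "red_classes w p = red_class w p ` {1..length w}"

lemma reduce_eq:
  "reduce (w, p) = std w (Min ` red_classes w p) ((\<lambda>b. Min ` {c \<in> red_classes w p. c \<subseteq> b}) ` p)"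
  by (simp add: reduce_def red_classes_def)

lemma red_class_subset: "red_class w p i \<subseteq> {1..length w}"
  unfolding red_class_def by auto

lemma mem_red_class_self:
  assumes "partition_on {1..length w} p" "i \<in> {1..length w}"
  shows "i \<in> red_class w p i"
proof -
  obtain b where "b \<in> p" "i \<in> b" using partition_onD1[OF assms(1)] assms(2) by auto
  then show ?thesis using assms(2) unfolding red_class_def red_sim_def by auto
qed

lemma red_class_subset_block:
  assumes P: "partition_on {1..length w} p" and "b \<in> p" "i \<in> b"
  shows "red_class w p i \<subseteq> b"
proof
  fix j assume "j \<in> red_class w p i"
  then obtain b' where "b' \<in> p" "i \<in> b'" "j \<in> b'"
    unfolding red_class_def red_sim_def by fastforce
  with assms show "j \<in> b" using partition_on_block_eq[OF P] by blast
qed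

lemma Min_red_class_mem:
  assumes "partition_on {1..length w} p" "c \<in> red_classes w p"
  shows "Min c \<in> c"
proof -
  obtain i where "i \<in> {1..length w}" "c = red_class w p i"
    using assms(2) unfolding red_classes_def by blast
  then show ?thesis
    using Min_in[OF finite_subset[OF red_class_subset]] mem_red_class_self[OF assms(1)] by blast
qed

lemma partition_on_reduced:
  assumes P: "partition_on {1..length w} p"
  shows "partition_on (Min ` red_classes w p) ((\<lambda>b. Min ` {c \<in> red_classes w p. c \<subseteq> b}) ` p)"
    (is "partition_on (Min ` ?Q) ?q")
proof (rule partition_onI)
  show "\<Union>?q = Min ` ?Q"
  proof
    show "\<Union>?q \<subseteq> Min ` ?Q" by auto
    show "Min ` ?Q \<subseteq> \<Union>?q"
    proof
      fix x assume "x \<in> Min ` ?Q"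
      then obtain i where i: "i \<in> {1..length w}" "x = Min (red_class w p i)"
        unfolding red_classes_def by blast
      obtain b where "b \<in> p" "i \<in> b" using partition_onD1[OF P] i(1) by blast
      then have "red_class w p i \<in> {c \<in> ?Q. c \<subseteq> b}"
        using red_class_subset_block[OF P] i(1) unfolding red_classes_def by blast
      then show "x \<in> \<Union>?q" using i(2) \<open>b \<in> p\<close> by blast
    qed
  qed
  show "{} \<notin> ?q"
  proof
    assume "{} \<in> ?q"
    then obtain b where "b \<in> p" and no_class: "{c \<in> ?Q. c \<subseteq> b} = {}" by auto
    obtain i where "i \<in> b" using partition_onD3[OF P] \<open>b \<in> p\<close> by (metis ex_in_conv)
    then have "i \<in> {1..length w}" using partition_onD1[OF P] \<open>b \<in> p\<close> by blast
    then have "red_class w p i \<in> {c \<in> ?Q. c \<subseteq> b}"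
      using red_class_subset_block[OF P \<open>b \<in> p\<close> \<open>i \<in> b\<close>] unfolding red_classes_def by blast
    then show False using no_class by blast
  qed
  fix X Y assume "X \<in> ?q" "Y \<in> ?q" "X \<noteq> Y"
  then obtain b b' where bb: "b \<in> p" "b' \<in> p" "b \<noteq> b'"
    "X = Min ` {c \<in> ?Q. c \<subseteq> b}" "Y = Min ` {c \<in> ?Q. c \<subseteq> b'}"
    by auto
  show "disjnt X Y"
    unfolding disjnt_iff
  proof (intro allI notI)
    fix x assume x: "x \<in> X \<and> x \<in> Y"
    then obtain c where c: "c \<in> ?Q" "c \<subseteq> b" "x = Min c" using bb(4) by blast
    obtain c' where c': "c' \<in> ?Q" "c' \<subseteq> b'" "x = Min c'" using x bb(5) by blast
    have "x \<in> b" using Min_red_class_mem[OF P c(1)] c(2,3) by auto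
    moreover have "x \<in> b'" using Min_red_class_mem[OF P c'(1)] c'(2,3) by auto
    ultimately show False using partition_on_block_eq[OF P bb(1,2)] bb(3) by blast
  qed
qed

lemma reduce_in_Pf:
  assumes "(w, p) \<in> Pf"
  shows "reduce (w, p) \<in> Pf"
proof -
  have P: "partition_on {1..length w} p" and "1 \<le> length w"
    using assms unfolding Pf_def by auto
  then have "finite (Min ` red_classes w p)" "Min ` red_classes w p \<noteq> {}"
    unfolding red_classes_def by auto
  then show ?thesis unfolding reduce_eq by (rule std_in_Pf[OF _ _ partition_on_reduced[OF P]])
qed

lemma card_snd_reduce_le:
  assumes "(w, p) \<in> Pf"
  shows "card (snd (reduce (w, p))) \<le> card p"
proof -
  have P: "partition_on {1..length w} p" using assms unfolding Pf_def by simp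
  have "finite (red_classes w p)" unfolding red_classes_def by simp
  then have "card (snd (reduce (w, p))) = card ((\<lambda>b. Min ` {c \<in> red_classes w p. c \<subseteq> b}) ` p)"
    unfolding reduce_eq by (simp add: card_snd_std[OF _ partition_on_reduced[OF P]])
  also have "\<dots> \<le> card p" using finite_elements[OF _ P] by (simp add: card_image_le)
  finally show ?thesis .
qed

lemma Min_red_class_eq_1:
  assumes "1 \<in> red_class w p i"
  shows "Min (red_class w p i) = 1"
proof (rule Min_eqI)
  show "finite (red_class w p i)" by (rule finite_subset[OF red_class_subset]) simp
  show "1 \<le> j" if "j \<in> red_class w p i" for j using that red_class_subset[of w p i] by auto
qed (fact assms)

lemma length_reduce_less:
  assumes "(w, p) \<in> Pf" "w ! 0 = w ! 1" "b \<in> p" "1 \<in> b" "2 \<in> b"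
  shows "length (fst (reduce (w, p))) < length w"
proof -
  define n where "n = length w"
  define m where "m i = Min (red_class w p i)" for i
  have P: "partition_on {1..n} p" using assms(1) unfolding Pf_def n_def by simp
  then have "2 \<le> n" using partition_onD1[OF P] assms(3,5) by auto
  have "{1..2::nat} = {1, 2}" by auto
  then have "red_sim w p 1 2" using assms(2-5) unfolding red_sim_def by auto
  then have "1 \<in> red_class w p 2" unfolding red_class_def using \<open>2 \<le> n\<close> n_def by simp
  moreover have "1 \<in> red_class w p 1"
    using mem_red_class_self[of w p 1] P \<open>2 \<le> n\<close> n_def by simp
  ultimately have "m 1 = m 2" unfolding m_def by (simp add: Min_red_class_eq_1)
  then have "\<not> inj_on m {1..n}" using \<open>2 \<le> n\<close> inj_onD[of m "{1..n}" 1 2] by auto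
  then have "card (m ` {1..n}) \<noteq> n" using inj_on_iff_eq_card[of "{1..n}" m] by simp
  moreover have "card (m ` {1..n}) \<le> n" using card_image_le[of "{1..n}" m] by simp
  ultimately have "card (m ` {1..n}) < n" by simp
  then show ?thesis
    unfolding reduce_eq length_fst_std red_classes_def image_image m_def n_def .
qed

lemma Pf_card_le_1_imp_one_block:
  assumes "(w, p) \<in> Pf" "card p \<le> 1"
  shows "(w, p) = one_block w"
proof -
  have P: "partition_on {1..length w} p" and "1 \<le> length w"
    using assms(1) unfolding Pf_def by auto
  then have "p \<noteq> {}" using partition_onD1[OF P] by auto
  moreover have "finite p" using finite_elements[OF _ P] by simp
  ultimately have "card p = 1" using assms(2) by (simp add: le_Suc_eq)
  then obtain b where "p = {b}" by (rule card_1_singletonE)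
  then show ?thesis using partition_onD1[OF P] unfolding one_block_def by simp
qed

lemma admissible_one_block:
  assumes "admissible \<alpha>" "1 \<le> length w"
  shows "\<alpha> (one_block w) = 1"
proof -
  have "\<forall>w. 1 \<le> length w \<longrightarrow> \<alpha> (one_block w) = 1"
    using assms(1) unfolding admissible_def by (elim conjE) assumption
  then show ?thesis using assms(2) by blast
qed

lemma admissible_reduce:
  assumes "admissible \<alpha>" "\<pi> \<in> Pf"
  shows "\<alpha> \<pi> = \<alpha> (reduce \<pi>)"
proof -
  have "\<forall>\<pi>\<in>Pf. \<alpha> \<pi> = \<alpha> (reduce \<pi>)"
    using assms(1) unfolding admissible_def by (elim conjE) assumption
  then show ?thesis using assms(2) by blast
qed

lemma admissible_merge:
  assumes "admissible \<alpha>" "(w, p) \<in> Pf" "b1 \<in> p" "b2 \<in> p" "b1 \<noteq> b2"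
    "i \<in> b1" "i + 1 \<in> b2" "w ! (i - 1) = w ! i"
  shows "\<alpha> (w, p) = \<alpha> (w, merge p b1 b2) * \<alpha> (std w (b1 \<union> b2) {b1, b2})"
proof -
  have "\<forall>(w, p)\<in>Pf. \<forall>b1\<in>p. \<forall>b2\<in>p. \<forall>i. b1 \<noteq> b2 \<and> i \<in> b1 \<and> i + 1 \<in> b2 \<and> w ! (i - 1) = w ! i \<longrightarrow>
      \<alpha> (w, p) = \<alpha> (w, merge p b1 b2) * \<alpha> (std w (b1 \<union> b2) {b1, b2})"
    using assms(1) unfolding admissible_def by (elim conjE) assumption
  from bspec[OF this assms(2)] show ?thesis using assms(3-8) by (simp only: prod.case) blast
qed

lemma admissible_update_first_face:
  assumes "admissible \<alpha>" "(w, p) \<in> Pf"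
  shows "\<alpha> (w, p) = \<alpha> (w[0 := f], p)"
proof -
  have "\<forall>(w, p)\<in>Pf. \<forall>(v, q)\<in>Pf. length v = length w \<and> q = p \<and>
      (\<forall>l. 1 < l \<and> l < length w \<longrightarrow> w ! (l - 1) = v ! (l - 1)) \<longrightarrow> \<alpha> (w, p) = \<alpha> (v, q)"
    using assms(1) unfolding admissible_def by (elim conjE) assumption
  moreover have "(w[0 := f], p) \<in> Pf" using assms(2) unfolding Pf_def by simp
  ultimately show ?thesis using assms(2) by fastforce
qed

lemma std_two_blocks:
  assumes "finite A" "partition_on A P" "b1 \<in> P" "b2 \<in> P" "b1 \<noteq> b2"
  shows "std w (b1 \<union> b2) {b1, b2} \<in> Pf" "card (snd (std w (b1 \<union> b2) {b1, b2})) = 2"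
proof -
  have pair: "partition_on (b1 \<union> b2) {b1, b2}"
  proof (rule partition_onI)
    show "disjnt x y" if "x \<in> {b1, b2}" "y \<in> {b1, b2}" "x \<noteq> y" for x y
      using that partition_on_block_eq[OF assms(2) assms(3,4)] by (auto simp: disjnt_def)
    show "{} \<notin> {b1, b2}" using partition_onD3[OF assms(2)] assms(3,4) by auto
  qed simp
  have "b1 \<subseteq> A" "b2 \<subseteq> A" using partition_onD1[OF assms(2)] assms(3,4) by auto
  then have fin: "finite (b1 \<union> b2)" using assms(1) finite_subset by auto
  moreover have "b1 \<union> b2 \<noteq> {}" using partition_onD3[OF assms(2)] assms(3) by auto
  ultimately show "std w (b1 \<union> b2) {b1, b2} \<in> Pf" by (rule std_in_Pf[OF _ _ pair])
  show "card (snd (std w (b1 \<union> b2) {b1, b2})) = 2"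
    using card_snd_std[OF fin pair] assms(5) by (simp add: numeral_2_eq_2)
qed

lemma admissible_first_legs_same_block:
  assumes "admissible \<alpha>" "(w, p) \<in> Pf"
  shows "\<alpha> (w, p) = \<alpha> (reduce (w[0 := w ! 1], p))"
proof -
  have "(w[0 := w ! 1], p) \<in> Pf" using assms(2) unfolding Pf_def by simp
  have "\<alpha> (w, p) = \<alpha> (w[0 := w ! 1], p)" by (rule admissible_update_first_face[OF assms])
  also have "\<dots> = \<alpha> (reduce (w[0 := w ! 1], p))" by (rule admissible_reduce) fact+
  finally show ?thesis .
qed

lemma admissible_first_legs_distinct_blocks:
  assumes "admissible \<alpha>" "(w, p) \<in> Pf" "b1 \<in> p" "b2 \<in> p" "b1 \<noteq> b2" "1 \<in> b1" "2 \<in> b2"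
  defines "w' \<equiv> w[0 := w ! 1]"
  shows "\<alpha> (w, p) = \<alpha> (w', merge p b1 b2) * \<alpha> (std w' (b1 \<union> b2) {b1, b2})"
proof -
  have Pf': "(w', p) \<in> Pf" using assms(2) unfolding Pf_def w'_def by simp
  have "1 \<le> length w" using assms(2) unfolding Pf_def by simp
  then have faces: "w' ! (1 - 1) = w' ! 1" unfolding w'_def by (simp add: Suc_le_eq)
  have "1 + 1 \<in> b2" using assms(7) by (simp add: numeral_2_eq_2)
  have "\<alpha> (w, p) = \<alpha> (w', p)" unfolding w'_def by (rule admissible_update_first_face[OF assms(1,2)])
  also have "\<dots> = \<alpha> (w', merge p b1 b2) * \<alpha> (std w' (b1 \<union> b2) {b1, b2})"
    by (rule admissible_merge[OF assms(1) Pf' assms(3-6) \<open>1 + 1 \<in> b2\<close> faces])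
  finally show ?thesis .
qed

lemma admissible_eq_if_eq_on_smaller:
  assumes A: "admissible \<alpha>" and B: "admissible \<beta>"
    and two_blocks: "\<forall>\<sigma>\<in>Pf. card (snd \<sigma>) = 2 \<longrightarrow> \<alpha> \<sigma> = \<beta> \<sigma>"
    and Pf: "(w, p) \<in> Pf" and "2 \<le> card p"
    and smaller: "\<And>\<sigma>. \<sigma> \<in> Pf \<Longrightarrow> length (fst \<sigma>) + card (snd \<sigma>) < length w + card p \<Longrightarrow> \<alpha> \<sigma> = \<beta> \<sigma>"
  shows "\<alpha> (w, p) = \<beta> (w, p)"
proof -
  have P: "partition_on {1..length w} p" and "1 \<le> length w" using Pf unfolding Pf_def by auto
  have "1 \<in> {1..length w}" "2 \<in> {1..length w}"
    using card_partition_on_le[OF _ P] \<open>2 \<le> card p\<close> by simp_all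
  then obtain b1 b2 where b1: "b1 \<in> p" "1 \<in> b1" and b2: "b2 \<in> p" "2 \<in> b2"
    using partition_onD1[OF P] by blast
  define w' where "w' = w[0 := w ! 1]"
  have "length w' = length w" unfolding w'_def by simp
  then have Pf': "(w', p) \<in> Pf" using Pf unfolding Pf_def by simp
  show ?thesis
  proof (cases "b1 = b2")
    case True
    have "w' ! 0 = w' ! 1" using \<open>1 \<le> length w\<close> unfolding w'_def by (simp add: Suc_le_eq)
    then have "\<alpha> (reduce (w', p)) = \<beta> (reduce (w', p))"
      using smaller[OF reduce_in_Pf[OF Pf']] length_reduce_less[OF Pf' _ b1 b2(2)[folded True]]
        card_snd_reduce_le[OF Pf'] \<open>length w' = length w\<close> by simp
    then show ?thesis
      using admissible_first_legs_same_block[OF A Pf] admissible_first_legs_same_block[OF B Pf]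
      unfolding w'_def by simp
  next
    case False
    have "(w', merge p b1 b2) \<in> Pf"
      using partition_on_merge[OF P b1(1) b2(1)] \<open>1 \<le> length w\<close> \<open>length w' = length w\<close>
      unfolding Pf_def by simp
    then have "\<alpha> (w', merge p b1 b2) = \<beta> (w', merge p b1 b2)"
      using smaller card_merge_less[OF finite_elements[OF _ P] b1(1) b2(1) False]
        \<open>length w' = length w\<close> by simp
    moreover have "\<alpha> (std w' (b1 \<union> b2) {b1, b2}) = \<beta> (std w' (b1 \<union> b2) {b1, b2})"
      using two_blocks std_two_blocks[OF finite_atLeastAtMost P b1(1) b2(1) False, of w'] by blast
    ultimately show ?thesis
      using admissible_first_legs_distinct_blocks[OF A Pf b1(1) b2(1) False b1(2) b2(2), folded w'_def]
        admissible_first_legs_distinct_blocks[OF B Pf b1(1) b2(1) False b1(2) b2(2), folded w'_def]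
      by simp
  qed
qed

lemma admissible_eq_if_eq_on_two_blocks:
  assumes A: "admissible \<alpha>" and B: "admissible \<beta>"
    and two_blocks: "\<forall>\<sigma>\<in>Pf. card (snd \<sigma>) = 2 \<longrightarrow> \<alpha> \<sigma> = \<beta> \<sigma>"
  shows "\<pi> \<in> Pf \<Longrightarrow> \<alpha> \<pi> = \<beta> \<pi>"
proof (induction \<pi> rule: measure_induct_rule[where f = "\<lambda>\<pi>. length (fst \<pi>) + card (snd \<pi>)"])
  case (less \<pi>)
  obtain w p where \<pi>: "\<pi> = (w, p)" by fastforce
  have Pf: "(w, p) \<in> Pf" using less.prems \<pi> by simp
  show ?case
  proof (cases "card p \<le> 1")
    case True
    have "1 \<le> length w" using Pf unfolding Pf_def by simp
    then show ?thesis using Pf_card_le_1_imp_one_block[OF Pf True] \<pi>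
      by (simp add: admissible_one_block[OF A] admissible_one_block[OF B])
  next
    case False
    then show ?thesis
      using admissible_eq_if_eq_on_smaller[OF A B two_blocks Pf] less.IH \<pi> by simp
  qed
qed

theorem lemma6p3:
  fixes \<alpha> \<beta> :: "('f::finite) mpart \<Rightarrow> complex"
  assumes "admissible \<alpha>" and "admissible \<beta>"
  shows "(\<forall>\<pi>\<in>Pf. \<alpha> \<pi> = \<beta> \<pi>) \<longleftrightarrow> (\<forall>\<sigma>\<in>Pf. card (snd \<sigma>) = 2 \<longrightarrow> \<alpha> \<sigma> = \<beta> \<sigma>)"
  using admissible_eq_if_eq_on_two_blocks[OF assms] by blast

end
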